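(* For all positive even $k_1,\ldots, k_n$ one has \[S_{k_1}\,|\, \ldots\,|\, S_{k_n}=S_{|\vec{k}|-n,F_n}\, .\]
   Context: $\mathscr{P}$ is the set of partitions and $r_m(\lambda)$ the number of parts of $\lambda$ equal to $m$. $S_k(\lambda)=-\frac{B_k}{2k}+\sum_i\lambda_i^{k-1}$ for even $k$. For $k>0$ and $f:\mathbb{N}\to\mathbb{Q}$ extended by $f(0)=0$, $S_{k,f}(\lambda)=-\frac{B_{k+1}}{2(k+1)}\delta_{f,\mathrm{id}}+\sum_{m\ge1}m^kf(r_m(\lambda))$ (so $S_k=S_{k-1,\mathrm{id}}$). $F_n$ is the Faulhaber polynomial: the polynomial with zero constant term with $F_n(N)=\sum_{i=1}^N i^{n-1}$ for $N\ge1$. $|\vec k|=k_1+\cdots+k_n$. The induced product $\odot$ is defined by $\langle f\odot g\rangle_{\vec u}=\langle f\rangle_{\vec u}\langle g\rangle_{\vec u}$ with $\langle f\rangle_{\vec u}=\sum_\lambda f(\lambda)u_{\lambda_1}u_{\lambda_2}\cdots/\sum_\lambda u_{\lambda_1}u_{\lambda_2}\cdots$. The connected product is $f_1|\ldots|f_n=\sum_{\alpha\in\Pi(n)}\mu(\alpha,\mathbf{1})\bigodot_{A\in\alpha}f_A$, where $\Pi(n)$ is the set of set partitions of $\{1,\ldots,n\}$, $\mu(\alpha,\mathbf{1})=(-1)^{\ell(\alpha)-1}(\ell(\alpha)-1)!$, and $f_A=\prod_{a\in A}f_a$ (pointwise product). *)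

theory Defs
  imports Complex_Main "HOL-Library.Multiset" "HOL-Library.FuncSet" "HOL-Library.Disjoint_Sets"
begin

text \<open>Bernoulli numbers (explicit formula; agrees with the usual B_k for all k except k = 1,
  and only even indices are used below).\<close>
definition bernoulli :: "nat \<Rightarrow> rat" where
  "bernoulli m = (\<Sum>k\<le>m. (1 / of_nat (k+1)) *
      (\<Sum>j\<le>k. (-1)^j * of_nat (k choose j) * of_nat j ^ m))"

text \<open>Partitions are finite multisets of positive integers (the parts).
  Functions on partitions are functions on nat multisets; only values on
  partitions matter.\<close>
definition is_partition :: "nat multiset \<Rightarrow> bool" where
  "is_partition p \<longleftrightarrow> 0 \<notin># p"

text \<open>Formal power series in the variables u_0, u_1, u_2, ...: the coefficient of the
  monomial prod_{i in M} u_i is indexed by the multiset M.\<close>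
type_synonym series = "nat multiset \<Rightarrow> rat"

definition ser_mult :: "series \<Rightarrow> series \<Rightarrow> series" where
  "ser_mult a b M = (\<Sum>A\<in>{A. A \<subseteq># M}. a A * b (M - A))"

definition ser_prod :: "'i set \<Rightarrow> ('i \<Rightarrow> series) \<Rightarrow> series" where
  "ser_prod I a M = (\<Sum>\<phi>\<in>{\<phi> \<in> I \<rightarrow>\<^sub>E {A. A \<subseteq># M}. sum \<phi> I = M}. \<Prod>i\<in>I. a i (\<phi> i))"

definition gen :: "(nat multiset \<Rightarrow> rat) \<Rightarrow> series" where
  "gen f M = (if is_partition M then f M else 0)"

definition Zser :: series where
  "Zser = gen (\<lambda>_. 1)"

text \<open>The u-bracket <f>_u = (sum f(lambda) u_lambda) / (sum u_lambda).\<close>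
definition ubracket :: "(nat multiset \<Rightarrow> rat) \<Rightarrow> series" where
  "ubracket f = (THE q. ser_mult q Zser = gen f)"

definition odot_family :: "'i set \<Rightarrow> ('i \<Rightarrow> nat multiset \<Rightarrow> rat) \<Rightarrow> nat multiset \<Rightarrow> rat" where
  "odot_family I f = (THE h. (\<forall>M. \<not> is_partition M \<longrightarrow> h M = 0) \<and>
      ubracket h = ser_prod I (\<lambda>i. ubracket (f i)))"

definition connected_product :: "nat \<Rightarrow> (nat \<Rightarrow> nat multiset \<Rightarrow> rat) \<Rightarrow> nat multiset \<Rightarrow> rat" where
  "connected_product n f = (\<lambda>p.
     \<Sum>\<alpha>\<in>{P. partition_on {1..n} P}.
       (-1) ^ (card \<alpha> - 1) * of_nat (fact (card \<alpha> - 1)) *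
       odot_family \<alpha> (\<lambda>A q. \<Prod>a\<in>A. f a q) p)"

definition S :: "nat \<Rightarrow> nat multiset \<Rightarrow> rat" where
  "S k p = - bernoulli k / (2 * of_nat k) + (\<Sum>\<^sub># (image_mset (\<lambda>x. of_nat x ^ (k - 1)) p))"

text \<open>S_{k,f}(lambda) = -B_{k+1}/(2(k+1)) delta_{f,id} + sum_{m>=1} m^k f(r_m(lambda)),
  with f extended by f(0) = 0.\<close>
definition S_f :: "nat \<Rightarrow> (nat \<Rightarrow> rat) \<Rightarrow> nat multiset \<Rightarrow> rat" where
  "S_f k f p = (if (\<forall>N\<ge>1. f N = of_nat N) then - bernoulli (k+1) / (2 * of_nat (k+1)) else 0)
      + (\<Sum>m\<in>set_mset p. of_nat m ^ k * f (count p m))"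

definition faulhaber :: "nat \<Rightarrow> nat \<Rightarrow> rat" where
  "faulhaber n N = (\<Sum>i=1..N. of_nat i ^ (n - 1))"

end

theory Submission
  imports Defs "HOL-Computational_Algebra.Formal_Power_Series"
begin

(*
  Work in the ring of formal power series in the variables u_1, u_2, ..., with monomials
  indexed by multisets.  There <f>_u = (sum_lambda f(lambda) u_lambda) / Z, the induced
  product is the ordinary product of series, and so S_k1 | ... | S_kn is read off from the
  joint cumulant (Moebius inversion over set partitions) of the brackets <S_k1>, ..., <S_kn>.

  Below a fixed partition each S_k is a linear statistic c + sum_m w(m) r_m in the part
  multiplicities r_m, and Z factors into independent geometric series 1/(1 - u_m).  An
  analogue of Stein's identity, <r_m X_C> = sum_{B <= C} w_B(m) Li_{-|B|}(u_m) <X_{C-B}>,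
  then shows that the joint cumulant of linear statistics is c [|C| = 1] +
  sum_m prod_{b in C} w_b(m) Li_{1-|C|}(u_m).  As Li_{1-n}(u) / (1 - u) generates the
  Faulhaber polynomial F_n, this cumulant is the bracket of S_{|k|-n, F_n}.
*)

unbundle fps_syntax

section \<open>Cumulants over set partitions\<close>

definition partition_moebius :: "nat \<Rightarrow> 'a::comm_ring_1" where
  "partition_moebius l = (-1) ^ (l - 1) * of_nat (fact (l - 1))"

definition cumulant :: "('e set \<Rightarrow> 'a::comm_ring_1) \<Rightarrow> 'e set \<Rightarrow> 'a" where
  "cumulant m C = (\<Sum>\<alpha>\<in>{P. partition_on C P}. partition_moebius (card \<alpha>) * (\<Prod>A\<in>\<alpha>. m A))"

lemma partition_moebius_rec:
  assumes "l \<ge> 2"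
  shows "partition_moebius l + of_nat (l - 1) * partition_moebius (l - 1) = (0::'a::comm_ring_1)"
proof -
  obtain j where l: "l = j + 2" using assms by (metis add.commute le_iff_add)
  show ?thesis
    unfolding partition_moebius_def l by (simp add: fact_Suc algebra_simps)
qed

lemma partition_on_card_blocks_not_containing:
  assumes "partition_on C P" "c \<in> C" "finite P"
  shows "card {D \<in> P. c \<notin> D} = card P - 1"
proof -
  obtain D where D: "D \<in> P" "c \<in> D" using assms partition_onD1 by blast
  have "{D' \<in> P. c \<notin> D'} = P - {D}"
    using D partition_onD2[OF assms(1)] unfolding disjoint_def by blast
  then show ?thesis using D assms(3) by simp
qed

lemma partition_on_card_1: "partition_on C P \<Longrightarrow> card P = 1 \<Longrightarrow> P = {C}"
  by (metis card_1_singletonE cSup_singleton partition_onD1)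

lemma partition_on_block_subset: "partition_on C P \<Longrightarrow> D \<in> P \<Longrightarrow> D \<subseteq> C"
  by (auto dest: partition_onD1)

lemma bij_betw_partition_on_remove_block:
  assumes "c \<in> C"
  shows "bij_betw (\<lambda>(\<pi>, D). (C - D, \<pi> - {D}))
    (SIGMA \<pi>:{\<pi>. partition_on C \<pi>}. {D \<in> \<pi>. c \<notin> D})
    (SIGMA B:{B. c \<in> B \<and> B \<subseteq> C} - {C}. {\<alpha>. partition_on B \<alpha>})"
proof -
  have remove: "partition_on (C - D) (\<pi> - {D}) \<and> D \<subseteq> C \<and> C - D \<noteq> C"
    if \<pi>: "partition_on C \<pi>" and D: "D \<in> \<pi>" for \<pi> D
  proof -
    have "disjnt D (\<Union>(\<pi> - {D}))"
      using partition_onD2[OF \<pi>] D unfolding disjoint_def disjnt_def by blast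
    then show ?thesis
      using partition_on_insert[of D "\<pi> - {D}" C] \<pi> D partition_on_block_subset partition_onD3
      by (auto simp: insert_absorb)
  qed
  have insert: "partition_on C (insert (C - B) \<alpha>) \<and> C - B \<notin> \<alpha>"
    if B: "B \<subseteq> C" "B \<noteq> C" and \<alpha>: "partition_on B \<alpha>" for B \<alpha>
  proof -
    have "\<Union>\<alpha> = B" using \<alpha> partition_onD1 by blast
    then have "disjnt (C - B) (\<Union>\<alpha>)" by (auto simp: disjnt_def)
    moreover have "C - (C - B) = B" using B by blast
    ultimately have "partition_on C (insert (C - B) \<alpha>)"
      using partition_on_insert[of "C - B" \<alpha> C] \<alpha> B by auto
    moreover have "C - B \<notin> \<alpha>" using \<open>\<Union>\<alpha> = B\<close> B by blast
    ultimately show ?thesis by blast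
  qed
  show ?thesis
    by (rule bij_betw_byWitness[where f'="\<lambda>(B, \<alpha>). (insert (C - B) \<alpha>, C - B)"])
      (use assms remove insert in \<open>auto simp: double_diff insert_absorb\<close>)
qed

lemma sum_partitions_moebius_telescope:
  fixes m :: "'e set \<Rightarrow> 'a::comm_ring_1"
  assumes fin: "finite C" and c: "c \<in> C"
  shows "(\<Sum>\<pi>\<in>{\<pi>. partition_on C \<pi>}. (partition_moebius (card \<pi>) +
      of_nat (card \<pi> - 1) * partition_moebius (card \<pi> - 1)) * (\<Prod>A\<in>\<pi>. m A)) = m C"
proof -
  have "(\<Sum>\<pi>\<in>{\<pi>. partition_on C \<pi>}. (partition_moebius (card \<pi>) +
      of_nat (card \<pi> - 1) * partition_moebius (card \<pi> - 1)) * (\<Prod>A\<in>\<pi>. m A)) =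
      (\<Sum>\<pi>\<in>{\<pi>. partition_on C \<pi>}. if \<pi> = {C} then m C else 0)"
  proof (rule sum.cong)
    fix \<pi> assume "\<pi> \<in> {\<pi>. partition_on C \<pi>}"
    then have \<pi>: "partition_on C \<pi>" by simp
    have "\<pi> \<noteq> {}" using \<pi> c partition_onD1 by blast
    then have "card \<pi> \<ge> 1" using finite_elements[OF fin \<pi>] by (simp add: Suc_le_eq card_gt_0_iff)
    then consider "card \<pi> = 1" | "card \<pi> \<ge> 2" by linarith
    then show "(partition_moebius (card \<pi>) + of_nat (card \<pi> - 1) * partition_moebius (card \<pi> - 1)) *
        (\<Prod>A\<in>\<pi>. m A) = (if \<pi> = {C} then m C else 0)"
    proof cases
      case 1
      then show ?thesis using partition_on_card_1[OF \<pi>] by (simp add: partition_moebius_def)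
    next
      case 2
      then have "\<pi> \<noteq> {C}" by auto
      then show ?thesis by (simp only: partition_moebius_rec[OF 2] mult_zero_left) simp
    qed
  qed simp
  also have "\<dots> = m C"
  proof -
    have "finite {\<pi>. partition_on C \<pi>}" using fin by (rule finitely_many_partition_on)
    moreover have "partition_on C {C}" using c by (intro partition_on_space) auto
    ultimately show ?thesis by simp
  qed
  finally show ?thesis .
qed

theorem cumulant_recursion:
  fixes m :: "'e set \<Rightarrow> 'a::comm_ring_1"
  assumes fin: "finite C" and c: "c \<in> C" and m0: "m {} = 1"
  shows "(\<Sum>B\<in>{B. c \<in> B \<and> B \<subseteq> C}. cumulant m B * m (C - B)) = m C"
proof -
  let ?Bs = "{B. c \<in> B \<and> B \<subseteq> C}"
  let ?\<Pi> = "\<lambda>B. {\<alpha>. partition_on B \<alpha>}"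
  let ?\<mu> = "partition_moebius :: nat \<Rightarrow> 'a"
  have finBs: "finite ?Bs" using fin by (auto intro: finite_subset[where B="Pow C"])
  have fin\<Pi>: "finite (?\<Pi> B)" if "B \<subseteq> C" for B
    using finitely_many_partition_on finite_subset[OF that fin] by blast
  have fin_blocks: "finite \<pi>" if "partition_on B \<pi>" "B \<subseteq> C" for B \<pi>
    using finite_elements[OF finite_subset[OF that(2) fin] that(1)] .
  have block: "(\<Prod>A\<in>\<pi> - {D}. m A) * m (C - (C - D)) = (\<Prod>A\<in>\<pi>. m A)"
    if \<pi>: "partition_on C \<pi>" and D: "D \<in> \<pi>" for \<pi> D
  proof -
    have "C - (C - D) = D" using partition_on_block_subset[OF \<pi> D] by blast
    moreover have "finite \<pi>" using fin_blocks[OF \<pi>] by simp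
    ultimately show ?thesis using D by (simp add: prod.remove mult.commute)
  qed
  have "(\<Sum>B\<in>?Bs. cumulant m B * m (C - B)) =
      cumulant m C + (\<Sum>B\<in>?Bs - {C}. cumulant m B * m (C - B))"
    using c m0 by (simp add: sum.remove[OF finBs, of C])
  also have "(\<Sum>B\<in>?Bs - {C}. cumulant m B * m (C - B)) =
      (\<Sum>(B, \<alpha>)\<in>(SIGMA B:?Bs - {C}. ?\<Pi> B). ?\<mu> (card \<alpha>) * (\<Prod>A\<in>\<alpha>. m A) * m (C - B))"
    unfolding cumulant_def sum_distrib_right by (subst sum.Sigma) (use finBs fin\<Pi> in auto)
  also have "\<dots> = (\<Sum>(\<pi>, D)\<in>(SIGMA \<pi>:?\<Pi> C. {D \<in> \<pi>. c \<notin> D}). ?\<mu> (card \<pi> - 1) * (\<Prod>A\<in>\<pi>. m A))"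
    unfolding sum.reindex_bij_betw[OF bij_betw_partition_on_remove_block[OF c], symmetric]
    by (intro sum.cong refl) (clarsimp simp: mult.assoc block)
  also have "\<dots> = (\<Sum>\<pi>\<in>?\<Pi> C. \<Sum>D\<in>{D \<in> \<pi>. c \<notin> D}. ?\<mu> (card \<pi> - 1) * (\<Prod>A\<in>\<pi>. m A))"
    by (subst sum.Sigma) (use fin\<Pi> fin_blocks in auto)
  also have "\<dots> = (\<Sum>\<pi>\<in>?\<Pi> C. of_nat (card \<pi> - 1) * ?\<mu> (card \<pi> - 1) * (\<Prod>A\<in>\<pi>. m A))"
    by (intro sum.cong refl) (simp add: fin_blocks partition_on_card_blocks_not_containing[OF _ c])
  finally have "(\<Sum>B\<in>?Bs. cumulant m B * m (C - B)) = (\<Sum>\<pi>\<in>?\<Pi> C. (?\<mu> (card \<pi>) +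
      of_nat (card \<pi> - 1) * ?\<mu> (card \<pi> - 1)) * (\<Prod>A\<in>\<pi>. m A))"
    by (simp add: cumulant_def sum.distrib distrib_right)
  also have "\<dots> = m C" by (rule sum_partitions_moebius_telescope[OF fin c])
  finally show ?thesis .
qed

theorem cumulant_unique:
  fixes m K :: "'e set \<Rightarrow> 'a::comm_ring_1"
  assumes fin: "finite U" and m0: "m {} = 1"
    and rec: "\<And>C c. C \<subseteq> U \<Longrightarrow> c \<in> C \<Longrightarrow> (\<Sum>B\<in>{B. c \<in> B \<and> B \<subseteq> C}. K B * m (C - B)) = m C"
  shows "C \<subseteq> U \<Longrightarrow> C \<noteq> {} \<Longrightarrow> K C = cumulant m C"
proof (induction "card C" arbitrary: C rule: less_induct)
  case less
  obtain c where c: "c \<in> C" using less.prems by blast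
  have finC: "finite C" using less.prems fin finite_subset by blast
  let ?Bs = "{B. c \<in> B \<and> B \<subseteq> C} - {C}"
  have finBs: "finite {B. c \<in> B \<and> B \<subseteq> C}" using finC by (auto intro: finite_subset[where B="Pow C"])
  have IH: "K B = cumulant m B" if "B \<in> ?Bs" for B
  proof -
    from that have "B \<subset> C" "B \<noteq> {}" "B \<subseteq> U" using less.prems by auto
    then show ?thesis using less.hyps psubset_card_mono[OF finC] by blast
  qed
  have "K C + (\<Sum>B\<in>?Bs. K B * m (C - B)) = m C"
    using rec[OF less.prems(1) c] c m0 by (simp add: sum.remove[OF finBs, of C])
  moreover have "cumulant m C + (\<Sum>B\<in>?Bs. cumulant m B * m (C - B)) = m C"
    using cumulant_recursion[of C c m, OF finC c m0] c m0 by (simp add: sum.remove[OF finBs, of C])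
  moreover have "(\<Sum>B\<in>?Bs. K B * m (C - B)) = (\<Sum>B\<in>?Bs. cumulant m B * m (C - B))"
    using IH by simp
  ultimately show ?case by (metis add_right_cancel)
qed

section \<open>Power series in the variables u\<close>

datatype useries = USeries (ucoeff: "nat multiset \<Rightarrow> rat")

lemma useries_eqI: "(\<And>M. ucoeff x M = ucoeff y M) \<Longrightarrow> x = y"
  by (cases x; cases y) auto

lemma finite_submultisets: "finite {A. A \<subseteq># (M::'a multiset)}"
proof (rule finite_subset)
  show "{A. A \<subseteq># M} \<subseteq> mset ` {xs. set xs \<subseteq> set_mset M \<and> length xs \<le> size M}"
  proof
    fix A assume "A \<in> {A. A \<subseteq># M}"
    then show "A \<in> mset ` {xs. set xs \<subseteq> set_mset M \<and> length xs \<le> size M}"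
      by (metis (mono_tags, lifting) ex_mset image_eqI mem_Collect_eq mset_subset_eqD
          set_mset_mset size_mset size_mset_mono subsetI)
  qed
qed (simp add: finite_lists_length_le)

lemma ser_mult_commute: "ser_mult a b M = ser_mult b a M"
  unfolding ser_mult_def
  by (rule sum.reindex_bij_witness[where i="\<lambda>A. M - A" and j="\<lambda>A. M - A"])
     (auto simp: subset_mset.diff_diff_right mult.commute)

lemma ser_mult_assoc: "ser_mult (ser_mult a b) c M = ser_mult a (ser_mult b c) M"
proof -
  have "ser_mult (ser_mult a b) c M =
     (\<Sum>(A, B)\<in>(SIGMA A:{A. A \<subseteq># M}. {B. B \<subseteq># A}). a B * b (A - B) * c (M - A))"
    unfolding ser_mult_def sum_distrib_right
    by (subst sum.Sigma) (auto simp: finite_submultisets)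
  also have "\<dots> = (\<Sum>(B, D)\<in>(SIGMA B:{B. B \<subseteq># M}. {D. D \<subseteq># M - B}). a B * (b D * c (M - B - D)))"
  proof (rule sum.reindex_bij_witness[where i="\<lambda>(B, D). (B + D, B)" and j="\<lambda>(A, B). (B, A - B)"])
    show "\<And>x. x \<in> (SIGMA B:{B. B \<subseteq># M}. {D. D \<subseteq># M - B}) \<Longrightarrow>
         (case (case x of (B, D) \<Rightarrow> (B + D, B)) of (A, B) \<Rightarrow> (B, A - B)) = x" by auto
    show "\<And>x. x \<in> (SIGMA B:{B. B \<subseteq># M}. {D. D \<subseteq># M - B}) \<Longrightarrow>
         (case x of (B, D) \<Rightarrow> (B + D, B)) \<in> (SIGMA A:{A. A \<subseteq># M}. {B. B \<subseteq># A})"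
      by (clarsimp simp: subseteq_mset_def) (metis le_diff_conv2 add.commute)
    show "\<And>x. x \<in> (SIGMA A:{A. A \<subseteq># M}. {B. B \<subseteq># A}) \<Longrightarrow>
         (case (case x of (A, B) \<Rightarrow> (B, A - B)) of (B, D) \<Rightarrow> (B + D, B)) = x"
      by (auto simp: subset_mset.add_diff_inverse)
    show "\<And>x. x \<in> (SIGMA A:{A. A \<subseteq># M}. {B. B \<subseteq># A}) \<Longrightarrow>
         (case x of (A, B) \<Rightarrow> (B, A - B)) \<in> (SIGMA B:{B. B \<subseteq># M}. {D. D \<subseteq># M - B})"
      by (clarsimp simp: subseteq_mset_def; metis diff_le_mono order_trans)
    have e: "M - B - (A - B) = M - A" if "B \<subseteq># A" "A \<subseteq># M" for A B :: "nat multiset"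
      using that by (auto simp: multiset_eq_iff subseteq_mset_def)
    show "\<And>x. x \<in> (SIGMA A:{A. A \<subseteq># M}. {B. B \<subseteq># A}) \<Longrightarrow>
         (case case x of (A, B) \<Rightarrow> (B, A - B) of (B, D) \<Rightarrow> a B * (b D * c (M - B - D))) =
         (case x of (A, B) \<Rightarrow> a B * b (A - B) * c (M - A))"
      by (auto simp: mult.assoc e)
  qed
  also have "\<dots> = ser_mult a (ser_mult b c) M"
    unfolding ser_mult_def sum_distrib_left
    by (subst sum.Sigma) (auto simp: finite_submultisets)
  finally show ?thesis .
qed

instantiation useries :: comm_ring_1
begin
definition "0 = USeries (\<lambda>_. 0)"
definition "1 = USeries (\<lambda>M. if M = {#} then 1 else 0)"
definition "x + y = USeries (\<lambda>M. ucoeff x M + ucoeff y M)"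
definition "x - y = USeries (\<lambda>M. ucoeff x M - ucoeff y M)"
definition "- x = USeries (\<lambda>M. - ucoeff x M)"
definition "x * y = USeries (ser_mult (ucoeff x) (ucoeff y))"
instance
proof
  fix a b c :: useries
  show "a * b * c = a * (b * c)"
    by (rule useries_eqI) (simp add: times_useries_def ser_mult_assoc)
  show "a * b = b * a"
    by (rule useries_eqI) (simp add: times_useries_def ser_mult_commute)
  show "1 * a = a"
  proof (rule useries_eqI)
    fix M
    have "ucoeff (1 * a) M = (\<Sum>A\<in>{A. A \<subseteq># M}. if A = {#} then ucoeff a (M - A) else 0)"
      by (auto simp: times_useries_def one_useries_def ser_mult_def intro!: sum.cong)
    then show "ucoeff (1 * a) M = ucoeff a M" by (simp add: finite_submultisets)
  qed
  show "(a + b) * c = a * c + b * c"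
    by (rule useries_eqI)
      (simp add: times_useries_def plus_useries_def ser_mult_def sum.distrib algebra_simps)
  show "a + b + c = a + (b + c)" by (rule useries_eqI) (simp add: plus_useries_def)
  show "a + b = b + a" by (rule useries_eqI) (simp add: plus_useries_def)
  show "0 + a = a" by (rule useries_eqI) (simp add: plus_useries_def zero_useries_def)
  show "- a + a = 0"
    by (rule useries_eqI) (simp add: plus_useries_def zero_useries_def uminus_useries_def)
  show "a - b = a + - b"
    by (rule useries_eqI) (simp add: plus_useries_def minus_useries_def uminus_useries_def)
  show "(0::useries) \<noteq> 1" by (auto simp: zero_useries_def one_useries_def fun_eq_iff)
qed
end

lemma ucoeff_add [simp]: "ucoeff (x + y) M = ucoeff x M + ucoeff y M"
  by (simp add: plus_useries_def)

lemma ucoeff_0 [simp]: "ucoeff 0 M = 0"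
  by (simp add: zero_useries_def)

lemma ucoeff_1: "ucoeff 1 M = (if M = {#} then 1 else 0)"
  by (simp add: one_useries_def)

lemma ucoeff_mult: "ucoeff (x * y) M = (\<Sum>A\<in>{A. A \<subseteq># M}. ucoeff x A * ucoeff y (M - A))"
  by (simp add: times_useries_def ser_mult_def)

lemma ucoeff_sum: "ucoeff (sum f I) M = (\<Sum>i\<in>I. ucoeff (f i) M)"
  by (induction I rule: infinite_finite_induct) auto

lemma bij_betw_PiE_insert_sum:
  fixes M :: "'a multiset"
  assumes "finite I" "i \<notin> I"
  shows "bij_betw (\<lambda>\<phi>. (\<phi> i, restrict \<phi> I))
    {\<phi> \<in> insert i I \<rightarrow>\<^sub>E {A. A \<subseteq># M}. sum \<phi> (insert i I) = M}
    (SIGMA A:{A. A \<subseteq># M}. {\<psi> \<in> I \<rightarrow>\<^sub>E {B. B \<subseteq># M - A}. sum \<psi> I = M - A})"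
    (is "bij_betw _ ?S ?T")
proof -
  have split: "(\<phi> i, restrict \<phi> I) \<in> ?T" if "\<phi> \<in> ?S" for \<phi>
  proof -
    from that have \<phi>: "\<phi> \<in> insert i I \<rightarrow>\<^sub>E {A. A \<subseteq># M}" and M: "M = \<phi> i + sum \<phi> I"
      using assms by auto
    have "sum (restrict \<phi> I) I = sum \<phi> I" by (rule sum.cong) auto
    moreover have "\<phi> j \<subseteq># sum \<phi> I" if "j \<in> I" for j
      using assms(1) that by (simp add: sum.remove)
    ultimately show ?thesis using \<phi> by (auto simp: M)
  qed
  have join: "(\<lambda>(A, \<psi>). \<psi>(i := A)) x \<in> ?S" if "x \<in> ?T" for x
  proof -
    obtain A \<psi> where x: "x = (A, \<psi>)" by fastforce
    from that have A: "A \<subseteq># M" and \<psi>: "\<psi> \<in> I \<rightarrow>\<^sub>E {B. B \<subseteq># M - A}" "sum \<psi> I = M - A"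
      by (auto simp: x)
    have "sum (\<psi>(i := A)) I = sum \<psi> I" using assms by (intro sum.cong) auto
    then have "sum (\<psi>(i := A)) (insert i I) = M" using assms \<psi> A by simp
    moreover have "\<psi> j \<subseteq># M" if "j \<in> I" for j
      using \<psi>(1) that
      by (auto simp: PiE_def Pi_def) (meson diff_subset_eq_self subset_mset.order_trans)
    ultimately show ?thesis using \<psi> A assms by (auto simp: x PiE_def extensional_def)
  qed
  show ?thesis
  proof (rule bij_betw_byWitness[where f'="\<lambda>(A, \<psi>). \<psi>(i := A)"])
    show "\<forall>\<phi>\<in>?S. (\<lambda>(A, \<psi>). \<psi>(i := A)) (\<phi> i, restrict \<phi> I) = \<phi>"
      using assms by (auto simp: PiE_def extensional_def fun_eq_iff)
    show "\<forall>x\<in>?T. (\<lambda>\<phi>. (\<phi> i, restrict \<phi> I)) ((\<lambda>(A, \<psi>). \<psi>(i := A)) x) = x"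
      using assms by (auto simp: PiE_def extensional_def fun_eq_iff)
    show "(\<lambda>\<phi>. (\<phi> i, restrict \<phi> I)) ` ?S \<subseteq> ?T" by (rule image_subsetI) (rule split)
    show "(\<lambda>(A, \<psi>). \<psi>(i := A)) ` ?T \<subseteq> ?S" by (rule image_subsetI) (rule join)
  qed
qed

lemma ser_prod_insert:
  assumes "finite I" "i \<notin> I"
  shows "ser_prod (insert i I) a M = ser_mult (a i) (ser_prod I a) M"
proof -
  have "ser_prod (insert i I) a M =
      (\<Sum>(A, \<psi>)\<in>(SIGMA A:{A. A \<subseteq># M}. {\<psi> \<in> I \<rightarrow>\<^sub>E {B. B \<subseteq># M - A}. sum \<psi> I = M - A}).
        a i A * (\<Prod>j\<in>I. a j (\<psi> j)))"
    unfolding ser_prod_def sum.reindex_bij_betw[OF bij_betw_PiE_insert_sum[OF assms], symmetric]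
    using assms by (intro sum.cong refl) (simp add: prod.insert)
  also have "\<dots> = (\<Sum>A\<in>{A. A \<subseteq># M}. a i A * ser_prod I a (M - A))"
    unfolding ser_prod_def sum_distrib_left
    by (subst sum.Sigma) (auto simp: finite_submultisets assms(1) intro!: finite_PiE
        finite_subset[OF _ finite_PiE[of I "\<lambda>_. {A. A \<subseteq># _}"]])
  finally show ?thesis by (simp add: ser_mult_def)
qed

lemma ser_prod_eq_ucoeff_prod: "finite I \<Longrightarrow> ser_prod I a = ucoeff (\<Prod>i\<in>I. USeries (a i))"
proof (induction I rule: finite_induct)
  case empty
  have "ser_prod {} a M = (if M = {#} then 1 else 0)" for M by (auto simp: ser_prod_def)
  then show ?case by (auto simp: ucoeff_1)
next
  case (insert i I)
  then show ?case by (intro ext) (simp add: ser_prod_insert times_useries_def)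
qed

function uinverse_coeff :: "useries \<Rightarrow> nat multiset \<Rightarrow> rat" where
  "uinverse_coeff x M = (if M = {#} then 1 / ucoeff x {#} else
     - (\<Sum>A\<in>{A. A \<subseteq># M \<and> A \<noteq> {#}}. ucoeff x A * uinverse_coeff x (M - A)) / ucoeff x {#})"
  by auto
termination
proof (relation "measure (\<lambda>(x, M). size M)")
  fix x :: useries and M A :: "nat multiset"
  assume "M \<noteq> {#}" "A \<in> {A. A \<subseteq># M \<and> A \<noteq> {#}}"
  then show "((x, M - A), x, M) \<in> measure (\<lambda>(x, M). size M)"
    by (auto simp: size_Diff_submset)
      (metis nonempty_has_size size_mset_mono zero_less_iff_neq_zero diff_less)
qed auto

declare uinverse_coeff.simps [simp del]

definition uinverse :: "useries \<Rightarrow> useries" where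
  "uinverse x = USeries (uinverse_coeff x)"

lemma useries_mult_uinverse:
  assumes "ucoeff x {#} \<noteq> 0"
  shows "x * uinverse x = 1"
proof (rule useries_eqI)
  fix M :: "nat multiset"
  have "ucoeff (x * uinverse x) M = ucoeff x {#} * uinverse_coeff x M +
      (\<Sum>A\<in>{A. A \<subseteq># M \<and> A \<noteq> {#}}. ucoeff x A * uinverse_coeff x (M - A))"
  proof -
    have "{A. A \<subseteq># M} = insert {#} {A. A \<subseteq># M \<and> A \<noteq> {#}}" by auto
    moreover have "finite {A. A \<subseteq># M \<and> A \<noteq> {#}}"
      using finite_submultisets by (rule finite_subset[rotated]) auto
    ultimately show ?thesis by (simp add: ucoeff_mult uinverse_def)
  qed
  also have "\<dots> = ucoeff 1 M"
    using assms by (subst (1) uinverse_coeff.simps) (auto simp: ucoeff_1)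
  finally show "ucoeff (x * uinverse x) M = ucoeff 1 M" .
qed

lemma uinverse_unique:
  assumes "y * x = 1" "ucoeff x {#} \<noteq> 0"
  shows "y = uinverse x"
proof -
  have "y = y * (x * uinverse x)" using useries_mult_uinverse[OF assms(2)] by simp
  then show ?thesis using assms(1) by (simp add: mult.assoc[symmetric])
qed

section \<open>Brackets and the induced product\<close>

definition Zu :: useries where
  "Zu = USeries Zser"

definition genu :: "(nat multiset \<Rightarrow> rat) \<Rightarrow> useries" where
  "genu f = USeries (gen f)"

definition bracket :: "(nat multiset \<Rightarrow> rat) \<Rightarrow> useries" where
  "bracket f = USeries (ubracket f)"

lemma ucoeff_Zu: "ucoeff Zu M = (if 0 \<in># M then 0 else 1)"
  by (simp add: Zu_def Zser_def gen_def is_partition_def)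

lemma ucoeff_genu: "ucoeff (genu f) M = (if 0 \<in># M then 0 else f M)"
  by (simp add: genu_def gen_def is_partition_def)

lemma Zu_mult_uinverse: "Zu * uinverse Zu = 1"
  by (rule useries_mult_uinverse) (simp add: ucoeff_Zu)

lemma bracket_eq: "bracket f = genu f * uinverse Zu"
proof -
  have "ubracket f = ucoeff (genu f * uinverse Zu)"
    unfolding ubracket_def
  proof (rule the_equality)
    have "USeries (ser_mult (ucoeff (genu f * uinverse Zu)) Zser) = genu f * uinverse Zu * Zu"
      by (simp add: times_useries_def Zu_def)
    also have "\<dots> = genu f"
      by (simp add: mult.assoc mult.commute[of "uinverse Zu"] Zu_mult_uinverse)
    finally show "ser_mult (ucoeff (genu f * uinverse Zu)) Zser = gen f"
      by (simp add: genu_def)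
  next
    fix q assume "ser_mult q Zser = gen f"
    then have "USeries q * Zu = genu f" by (simp add: times_useries_def Zu_def genu_def)
    then have "USeries q * Zu * uinverse Zu = genu f * uinverse Zu" by simp
    then have "USeries q = genu f * uinverse Zu" by (simp add: mult.assoc Zu_mult_uinverse)
    then show "q = ucoeff (genu f * uinverse Zu)" by (metis useries.sel)
  qed
  then show ?thesis by (simp add: bracket_def)
qed

lemma bracket_mult_Zu: "bracket f * Zu = genu f"
  by (simp add: bracket_eq mult.assoc mult.commute[of "uinverse Zu"] Zu_mult_uinverse)

text \<open>The substitution u_0 := 0; brackets are fixed by it, which keeps the induced
  product supported on partitions.\<close>

definition subst_u0_zero :: "useries \<Rightarrow> useries" where
  "subst_u0_zero x = USeries (\<lambda>M. if 0 \<in># M then 0 else ucoeff x M)"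

lemma subst_u0_zero_mult: "subst_u0_zero (x * y) = subst_u0_zero x * subst_u0_zero y"
proof (rule useries_eqI)
  fix M
  show "ucoeff (subst_u0_zero (x * y)) M = ucoeff (subst_u0_zero x * subst_u0_zero y) M"
  proof (cases "0 \<in># M")
    case True
    have "0 \<in># A \<or> 0 \<in># M - A" if "A \<subseteq># M" for A
      using True that
      by (metis add_diff_cancel_left' in_diffD subset_mset.add_diff_inverse union_iff)
    then have "ucoeff (subst_u0_zero x * subst_u0_zero y) M = 0"
      unfolding ucoeff_mult by (intro sum.neutral) (auto simp: subst_u0_zero_def)
    then show ?thesis using True by (simp add: subst_u0_zero_def)
  next
    case False
    then have "0 \<notin># A" "0 \<notin># M - A" if "A \<subseteq># M" for A
      using that by (auto dest: mset_subset_eqD in_diffD)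
    then have "ucoeff (subst_u0_zero x * subst_u0_zero y) M = ucoeff (x * y) M"
      unfolding ucoeff_mult by (intro sum.cong) (auto simp: subst_u0_zero_def)
    then show ?thesis using False by (simp add: subst_u0_zero_def)
  qed
qed

lemma subst_u0_zero_1: "subst_u0_zero 1 = 1"
  by (rule useries_eqI) (auto simp: subst_u0_zero_def ucoeff_1)

lemma subst_u0_zero_prod: "subst_u0_zero (\<Prod>i\<in>I. f i) = (\<Prod>i\<in>I. subst_u0_zero (f i))"
  by (induction I rule: infinite_finite_induct) (auto simp: subst_u0_zero_1 subst_u0_zero_mult)

lemma subst_u0_zero_genu: "subst_u0_zero (genu f) = genu f"
  by (rule useries_eqI) (simp add: subst_u0_zero_def ucoeff_genu)

lemma subst_u0_zero_Zu: "subst_u0_zero Zu = Zu"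
  by (rule useries_eqI) (simp add: subst_u0_zero_def ucoeff_Zu)

lemma subst_u0_zero_uinverse:
  assumes "subst_u0_zero x = x" "ucoeff x {#} \<noteq> 0"
  shows "subst_u0_zero (uinverse x) = uinverse x"
proof (rule uinverse_unique[OF _ assms(2)])
  have "subst_u0_zero (uinverse x) * x = subst_u0_zero (uinverse x * x)"
    by (simp add: subst_u0_zero_mult assms(1))
  then show "subst_u0_zero (uinverse x) * x = 1"
    using useries_mult_uinverse[OF assms(2)] by (simp add: mult.commute subst_u0_zero_1)
qed

lemma subst_u0_zero_bracket: "subst_u0_zero (bracket f) = bracket f"
  by (simp add: bracket_eq subst_u0_zero_mult subst_u0_zero_genu subst_u0_zero_uinverse
      subst_u0_zero_Zu ucoeff_Zu)

lemma odot_family_eq: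
  assumes "finite I" "is_partition p"
  shows "odot_family I g p = ucoeff ((\<Prod>i\<in>I. bracket (g i)) * Zu) p"
proof -
  define s where "s = (\<Prod>i\<in>I. bracket (g i))"
  define h where "h = (\<lambda>M. if is_partition M then ucoeff (s * Zu) M else 0)"
  have "ucoeff (genu h) M = ucoeff (subst_u0_zero (s * Zu)) M" for M
    by (simp add: ucoeff_genu h_def is_partition_def subst_u0_zero_def)
  moreover have "subst_u0_zero (s * Zu) = s * Zu"
    by (simp add: s_def subst_u0_zero_mult subst_u0_zero_prod subst_u0_zero_bracket
        subst_u0_zero_Zu)
  ultimately have genu_h: "genu h = s * Zu" by (intro useries_eqI) simp
  have "odot_family I g = h"
    unfolding odot_family_def ser_prod_eq_ucoeff_prod[OF assms(1)]
  proof (rule the_equality)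
    have "bracket h = s"
      by (simp add: bracket_eq genu_h mult.assoc Zu_mult_uinverse)
    then show "(\<forall>M. \<not> is_partition M \<longrightarrow> h M = 0) \<and>
        ubracket h = ucoeff (\<Prod>i\<in>I. USeries (ubracket (g i)))"
      by (auto simp: h_def s_def bracket_def dest: arg_cong[where f=ucoeff])
  next
    fix h' assume h': "(\<forall>M. \<not> is_partition M \<longrightarrow> h' M = 0) \<and>
        ubracket h' = ucoeff (\<Prod>i\<in>I. USeries (ubracket (g i)))"
    then have "bracket h' = s" by (simp add: bracket_def s_def)
    then have "genu h' = genu h" by (metis bracket_mult_Zu genu_h)
    then have eq: "(if 0 \<in># M then 0 else h' M) = (if 0 \<in># M then 0 else h M)" for M
      by (metis ucoeff_genu)
    show "h' = h"
    proof
      fix M show "h' M = h M"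
        using eq[of M] h' by (cases "0 \<in># M") (simp_all add: h_def is_partition_def)
    qed
  qed
  then show ?thesis using assms(2) by (simp add: h_def s_def)
qed

definition uconst :: "rat \<Rightarrow> useries" where
  "uconst c = USeries (\<lambda>M. if M = {#} then c else 0)"

lemma ucoeff_uconst_mult: "ucoeff (uconst c * x) M = c * ucoeff x M"
proof -
  have "ucoeff (uconst c * x) M = (\<Sum>A\<in>{A. A \<subseteq># M}. if A = {#} then c * ucoeff x (M - A) else 0)"
    by (auto simp: ucoeff_mult uconst_def intro!: sum.cong)
  then show ?thesis by (simp add: finite_submultisets)
qed

lemma uconst_add: "uconst (a + b) = uconst a + uconst b"
  by (rule useries_eqI) (simp add: uconst_def)

lemma uconst_mult: "uconst (a * b) = uconst a * uconst b"
  by (rule useries_eqI) (simp only: ucoeff_uconst_mult, simp add: uconst_def)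

lemma uconst_0: "uconst 0 = 0"
  by (rule useries_eqI) (simp add: uconst_def)

lemma uconst_1: "uconst 1 = 1"
  by (rule useries_eqI) (simp add: uconst_def ucoeff_1)

lemma uconst_uminus: "uconst (- a) = - uconst a"
  by (rule useries_eqI) (simp add: uconst_def uminus_useries_def)

lemma of_nat_useries: "of_nat n = uconst (of_nat n)"
  by (induction n) (simp_all add: uconst_0 uconst_add uconst_1)

lemma uconst_power: "uconst (a ^ n) = uconst a ^ n"
  by (induction n) (auto simp: uconst_1 uconst_mult)

lemma partition_moebius_useries: "partition_moebius l = uconst (partition_moebius l)"
  by (simp only: partition_moebius_def uconst_mult uconst_power uconst_uminus uconst_1
      of_nat_useries)

lemma bracket_add: "bracket (\<lambda>q. f q + g q) = bracket f + bracket g"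
proof -
  have "genu (\<lambda>q. f q + g q) = genu f + genu g"
    by (rule useries_eqI) (simp add: ucoeff_genu)
  then show ?thesis by (simp add: bracket_eq algebra_simps)
qed

lemma bracket_scale: "bracket (\<lambda>q. c * f q) = uconst c * bracket f"
proof -
  have "genu (\<lambda>q. c * f q) = uconst c * genu f"
    by (rule useries_eqI) (simp add: ucoeff_genu ucoeff_uconst_mult)
  then show ?thesis by (simp add: bracket_eq algebra_simps)
qed

lemma bracket_sum: "bracket (\<lambda>q. \<Sum>i\<in>I. f i q) = (\<Sum>i\<in>I. bracket (f i))"
proof -
  have "genu (\<lambda>q. \<Sum>i\<in>I. f i q) = (\<Sum>i\<in>I. genu (f i))"
    by (rule useries_eqI) (simp add: ucoeff_genu ucoeff_sum)
  then show ?thesis by (simp add: bracket_eq sum_distrib_right)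
qed

lemma bracket_const: "bracket (\<lambda>q. c) = uconst c"
proof -
  have "genu (\<lambda>q. c) = uconst c * Zu"
    by (rule useries_eqI) (simp add: ucoeff_genu ucoeff_uconst_mult ucoeff_Zu)
  then show ?thesis by (simp add: bracket_eq mult.assoc Zu_mult_uinverse)
qed

section \<open>Brackets of functions of one multiplicity\<close>

definition useries_of_fps :: "nat \<Rightarrow> rat fps \<Rightarrow> useries" where
  "useries_of_fps m f = USeries (\<lambda>M. if set_mset M \<subseteq> {m} then f $ size M else 0)"

lemma replicate_mset_count: "set_mset M \<subseteq> {m} \<Longrightarrow> M = replicate_mset (count M m) m"
  by (induction M) auto

lemma replicate_mset_diff: "replicate_mset n m - replicate_mset j m = replicate_mset (n - j) m"
  by (simp add: multiset_eq_iff)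

lemma submultisets_replicate_mset:
  "{A. A \<subseteq># replicate_mset n m} = (\<lambda>j. replicate_mset j m) ` {0..n}"
  by (auto simp: replicate_mset_msubseteq_iff elim!: msubseteq_replicate_msetE)

lemma useries_of_fps_mult: "useries_of_fps m (f * g) = useries_of_fps m f * useries_of_fps m g"
proof (rule useries_eqI)
  fix M :: "nat multiset"
  show "ucoeff (useries_of_fps m (f * g)) M = ucoeff (useries_of_fps m f * useries_of_fps m g) M"
  proof (cases "set_mset M \<subseteq> {m}")
    case True
    define n where "n = count M m"
    have M: "M = replicate_mset n m" using replicate_mset_count[OF True] by (simp add: n_def)
    have inj: "inj_on (\<lambda>j. replicate_mset j m) {0..n}"
      by (auto simp: inj_on_def dest: arg_cong[of _ _ size])
    have "ucoeff (useries_of_fps m f * useries_of_fps m g) M = (\<Sum>j=0..n. f $ j * g $ (n - j))"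
      unfolding ucoeff_mult M submultisets_replicate_mset sum.reindex[OF inj]
      by (intro sum.cong) (auto simp: useries_of_fps_def replicate_mset_diff)
    then show ?thesis by (simp add: useries_of_fps_def M fps_mult_nth)
  next
    case False
    have "ucoeff (useries_of_fps m f) A * ucoeff (useries_of_fps m g) (M - A) = 0" if "A \<subseteq># M" for A
    proof -
      have "set_mset M = set_mset A \<union> set_mset (M - A)"
        using that by (metis set_mset_union subset_mset.add_diff_inverse)
      then show ?thesis using False by (auto simp: useries_of_fps_def)
    qed
    then have "ucoeff (useries_of_fps m f * useries_of_fps m g) M = 0"
      unfolding ucoeff_mult by (intro sum.neutral) blast
    then show ?thesis using False by (simp add: useries_of_fps_def)
  qed
qed

lemma useries_of_fps_1: "useries_of_fps m 1 = 1"
  by (rule useries_eqI) (auto simp: useries_of_fps_def ucoeff_1)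

lemma useries_of_fps_sum: "useries_of_fps m (\<Sum>j\<in>J. f j) = (\<Sum>j\<in>J. useries_of_fps m (f j))"
  by (rule useries_eqI) (simp add: useries_of_fps_def ucoeff_sum fps_sum_nth)

lemma uconst_mult_useries_of_fps:
  "uconst c * useries_of_fps m f = useries_of_fps m (fps_const c * f)"
  by (rule useries_eqI) (simp add: useries_of_fps_def ucoeff_uconst_mult)

lemma geometric_series_times_one_minus_fps_X: "Abs_fps (\<lambda>_. 1) * (1 - fps_X) = (1 :: rat fps)"
proof -
  have "inverse (Abs_fps (\<lambda>_. 1 :: rat)) * Abs_fps (\<lambda>_. 1) = 1" by (rule inverse_mult_eq_1) simp
  then show ?thesis by (simp add: fps_inverse_gp' mult.commute)
qed

definition genu_avoiding :: "nat \<Rightarrow> (nat multiset \<Rightarrow> rat) \<Rightarrow> useries" where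
  "genu_avoiding m h = USeries (\<lambda>M. if m \<notin># M \<and> 0 \<notin># M then h M else 0)"

definition ignores_part :: "nat \<Rightarrow> (nat multiset \<Rightarrow> rat) \<Rightarrow> bool" where
  "ignores_part m h \<longleftrightarrow> (\<forall>q. h q = h (filter_mset (\<lambda>x. x \<noteq> m) q))"

lemma ignores_part_const: "ignores_part m (\<lambda>q. c)"
  by (simp add: ignores_part_def)

lemma genu_count_factor:
  assumes m: "m \<noteq> 0" and h: "ignores_part m h"
  shows "genu (\<lambda>q. \<phi> (count q m) * h q) = useries_of_fps m (Abs_fps \<phi>) * genu_avoiding m h"
proof (rule useries_eqI)
  fix M :: "nat multiset"
  define A0 where "A0 = filter_mset (\<lambda>x. x = m) M"
  have A0: "A0 = replicate_mset (count M m) m" unfolding A0_def by (rule filter_eq_replicate_mset)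
  have MA0: "M - A0 = filter_mset (\<lambda>x. x \<noteq> m) M"
    by (auto simp: multiset_eq_iff A0)
  have uniq: "A = A0" if "A \<subseteq># M" "set_mset A \<subseteq> {m}" "m \<notin># M - A" for A
  proof -
    have "count A m \<le> count M m" using that(1) by (simp add: subseteq_mset_def)
    moreover have "count (M - A) m = 0" using that(3) by (simp add: not_in_iff)
    ultimately show ?thesis using replicate_mset_count[OF that(2)] A0 by simp
  qed
  have "ucoeff (useries_of_fps m (Abs_fps \<phi>) * genu_avoiding m h) M =
      (\<Sum>A\<in>{A. A \<subseteq># M}. if A = A0 then
        ucoeff (useries_of_fps m (Abs_fps \<phi>)) A0 * ucoeff (genu_avoiding m h) (M - A0) else 0)"
    unfolding ucoeff_mult
    by (rule sum.cong) (auto simp: useries_of_fps_def genu_avoiding_def dest: uniq)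
  also have "\<dots> = ucoeff (useries_of_fps m (Abs_fps \<phi>)) A0 * ucoeff (genu_avoiding m h) (M - A0)"
    by (simp add: finite_submultisets A0_def)
  also have "\<dots> = (if 0 \<in># M then 0 else \<phi> (count M m) * h M)"
  proof -
    have "h (M - A0) = h M" using h unfolding ignores_part_def MA0 by metis
    moreover have "0 \<in># M - A0 \<longleftrightarrow> 0 \<in># M" using m by (simp add: MA0)
    moreover have "m \<notin># M - A0" by (simp add: MA0)
    ultimately show ?thesis by (simp add: useries_of_fps_def genu_avoiding_def A0)
  qed
  finally show "ucoeff (genu (\<lambda>q. \<phi> (count q m) * h q)) M =
      ucoeff (useries_of_fps m (Abs_fps \<phi>) * genu_avoiding m h) M"
    by (simp add: ucoeff_genu)
qed

lemma Zu_factor: "m \<noteq> 0 \<Longrightarrow> Zu = useries_of_fps m (Abs_fps (\<lambda>_. 1)) * genu_avoiding m (\<lambda>_. 1)"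
  using genu_count_factor[of m "\<lambda>_. 1" "\<lambda>_. 1"]
  by (simp add: ignores_part_const genu_def Zu_def Zser_def)

lemma bracket_count_mult_factor:
  assumes m: "m \<noteq> 0" and h: "ignores_part m h"
  shows "bracket (\<lambda>q. \<phi> (count q m) * h q) =
    useries_of_fps m (Abs_fps \<phi>) * genu_avoiding m h * uinverse Zu"
  by (simp add: bracket_eq genu_count_factor[OF assms])

lemma bracket_count:
  assumes m: "m \<noteq> 0"
  shows "bracket (\<lambda>q. \<phi> (count q m)) = useries_of_fps m (Abs_fps \<phi> * (1 - fps_X))"
proof -
  let ?G = "useries_of_fps m (Abs_fps (\<lambda>_. 1))" and ?Q = "useries_of_fps m (1 - fps_X)"
  have "bracket (\<lambda>q. \<phi> (count q m)) =
      useries_of_fps m (Abs_fps \<phi>) * genu_avoiding m (\<lambda>_. 1) * uinverse Zu"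
    using bracket_count_mult_factor[OF m ignores_part_const, of \<phi> 1] by simp
  also have "\<dots> = useries_of_fps m (Abs_fps \<phi>) * ?Q * (?G * genu_avoiding m (\<lambda>_. 1) * uinverse Zu)"
    using useries_of_fps_mult[of m "Abs_fps (\<lambda>_. 1)" "1 - fps_X"]
    by (simp add: geometric_series_times_one_minus_fps_X useries_of_fps_1 mult_ac)
  also have "\<dots> = useries_of_fps m (Abs_fps \<phi> * (1 - fps_X))"
    by (simp add: Zu_factor[OF m, symmetric] Zu_mult_uinverse useries_of_fps_mult)
  finally show ?thesis .
qed

lemma bracket_count_mult_ignoring:
  assumes m: "m \<noteq> 0" and h: "ignores_part m h"
  shows "bracket (\<lambda>q. \<phi> (count q m) * h q) = bracket (\<lambda>q. \<phi> (count q m)) * bracket h"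
proof -
  have "bracket h = useries_of_fps m (Abs_fps (\<lambda>_. 1)) * genu_avoiding m h * uinverse Zu"
    using bracket_count_mult_factor[OF m h, of "\<lambda>_. 1"] by simp
  then have "bracket (\<lambda>q. \<phi> (count q m)) * bracket h =
      useries_of_fps m (Abs_fps \<phi>) * genu_avoiding m h * uinverse Zu *
      (useries_of_fps m (Abs_fps (\<lambda>_. 1) * (1 - fps_X)))"
    by (simp add: bracket_count[OF m] useries_of_fps_mult mult_ac)
  then show ?thesis
    by (simp add: geometric_series_times_one_minus_fps_X useries_of_fps_1
        bracket_count_mult_factor[OF assms])
qed

definition power_fps :: "nat \<Rightarrow> rat fps" where
  "power_fps e = Abs_fps (\<lambda>s. of_nat s ^ e)"

definition polylog_fps :: "nat \<Rightarrow> rat fps" where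
  "polylog_fps e = Abs_fps (\<lambda>i. if i = 0 then 0 else of_nat i ^ e)"

lemma power_fps_Suc:
  "power_fps (Suc d) = (\<Sum>j\<le>d. fps_const (of_nat (d choose j)) * polylog_fps j * power_fps (d - j))"
proof (rule fps_ext)
  fix s
  have "(\<Sum>j\<le>d. fps_const (of_nat (d choose j)) * polylog_fps j * power_fps (d - j)) $ s =
      (\<Sum>j\<le>d. \<Sum>i=0..s. if i = 0 then 0 else
        of_nat (d choose j) * of_nat i ^ j * of_nat (s - i) ^ (d - j))"
    by (simp add: fps_sum_nth mult.assoc fps_mult_nth polylog_fps_def power_fps_def
        sum_distrib_left if_distrib if_distribR cong: if_cong)
  also have "\<dots> = (\<Sum>i=0..s. if i = 0 then 0 else
      \<Sum>j\<le>d. of_nat (d choose j) * of_nat i ^ j * of_nat (s - i) ^ (d - j))"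
    by (subst sum.swap) (auto intro!: sum.cong)
  also have "\<dots> = (\<Sum>i=0..s. if i = 0 then 0 else of_nat s ^ d)"
  proof (intro sum.cong refl)
    fix i assume "i \<in> {0..s}"
    then have s: "of_nat i + of_nat (s - i) = (of_nat s :: rat)" by (simp flip: of_nat_add)
    have "(\<Sum>j\<le>d. of_nat (d choose j) * of_nat i ^ j * of_nat (s - i) ^ (d - j)) =
        (of_nat s ^ d :: rat)"
      unfolding s[symmetric] by (subst binomial_ring) (rule refl)
    then show "(if i = 0 then 0 else
        \<Sum>j\<le>d. of_nat (d choose j) * of_nat i ^ j * of_nat (s - i) ^ (d - j)) =
        (if i = 0 then 0 else of_nat s ^ d :: rat)"
      by simp
  qed
  also have "\<dots> = power_fps (Suc d) $ s"
  proof -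
    have "{0..s} \<inter> - {0} = {1..s}" by auto
    then show ?thesis by (simp add: sum.If_cases power_fps_def)
  qed
  finally show "power_fps (Suc d) $ s =
      (\<Sum>j\<le>d. fps_const (of_nat (d choose j)) * polylog_fps j * power_fps (d - j)) $ s" ..
qed

definition moment_count :: "nat \<Rightarrow> nat \<Rightarrow> useries" where
  "moment_count m e = bracket (\<lambda>q. of_nat (count q m) ^ e)"

lemma moment_count_eq: "m \<noteq> 0 \<Longrightarrow> moment_count m e = useries_of_fps m (power_fps e * (1 - fps_X))"
  unfolding moment_count_def power_fps_def by (rule bracket_count)

lemma moment_count_Suc:
  assumes "m \<noteq> 0"
  shows "moment_count m (Suc d) =
    (\<Sum>j\<le>d. of_nat (d choose j) * useries_of_fps m (polylog_fps j) * moment_count m (d - j))"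
  by (simp add: moment_count_eq[OF assms] power_fps_Suc sum_distrib_right useries_of_fps_sum
      useries_of_fps_mult of_nat_useries uconst_mult_useries_of_fps mult.assoc)

lemma sum_Pow_card:
  fixes g :: "nat \<Rightarrow> 'a::comm_semiring_1"
  assumes "finite D"
  shows "(\<Sum>B\<in>Pow D. g (card B)) = (\<Sum>j\<le>card D. of_nat (card D choose j) * g j)"
proof -
  have "(\<Sum>B\<in>Pow D. g (card B)) = (\<Sum>j\<le>card D. \<Sum>B\<in>{B \<in> Pow D. card B = j}. g (card B))"
    using assms by (intro sum.group[symmetric]) (auto simp: card_mono)
  also have "\<dots> = (\<Sum>j\<le>card D. of_nat (card D choose j) * g j)"
  proof (intro sum.cong refl)
    fix j
    have "{B \<in> Pow D. card B = j} = {B. B \<subseteq> D \<and> card B = j}" by auto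
    then show "(\<Sum>B\<in>{B \<in> Pow D. card B = j}. g (card B)) = of_nat (card D choose j) * g j"
      using n_subsets[OF assms, of j] by simp
  qed
  finally show ?thesis .
qed

lemma moment_count_Suc_card:
  assumes "m \<noteq> 0" "finite D"
  shows "moment_count m (Suc (card D)) =
    (\<Sum>B\<in>Pow D. useries_of_fps m (polylog_fps (card B)) * moment_count m (card (D - B)))"
proof -
  have "(\<Sum>B\<in>Pow D. useries_of_fps m (polylog_fps (card B)) * moment_count m (card (D - B))) =
      (\<Sum>B\<in>Pow D. useries_of_fps m (polylog_fps (card B)) * moment_count m (card D - card B))"
    using assms(2) by (intro sum.cong) (auto simp: card_Diff_subset finite_subset)
  also have "\<dots> = (\<Sum>j\<le>card D. of_nat (card D choose j) *
      (useries_of_fps m (polylog_fps j) * moment_count m (card D - j)))"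
    by (rule sum_Pow_card[OF assms(2)])
  also have "\<dots> = moment_count m (Suc (card D))"
    by (simp add: moment_count_Suc[OF assms(1)] mult.assoc)
  finally show ?thesis ..
qed

lemma faulhaber_fps: "Abs_fps (faulhaber n) = polylog_fps (n - 1) * Abs_fps (\<lambda>_. 1)"
proof (rule fps_ext)
  fix s :: nat
  have "{0..s} \<inter> - {0} = {1..s}" by auto
  then show "Abs_fps (faulhaber n) $ s = (polylog_fps (n - 1) * Abs_fps (\<lambda>_. 1)) $ s"
    by (simp add: fps_mult_nth polylog_fps_def faulhaber_def sum.If_cases)
qed

lemma bracket_faulhaber:
  "m \<noteq> 0 \<Longrightarrow> bracket (\<lambda>q. faulhaber n (count q m)) = useries_of_fps m (polylog_fps (n - 1))"
  by (simp add: bracket_count faulhaber_fps mult.assoc geometric_series_times_one_minus_fps_X)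

section \<open>Cumulants of linear statistics\<close>

lemma sum_Pow_Pow_reindex:
  fixes f :: "'e set \<Rightarrow> 'e set \<Rightarrow> 'a::comm_monoid_add"
  assumes "finite C"
  shows "(\<Sum>D\<in>Pow C. \<Sum>B\<in>Pow D. f B D) = (\<Sum>B\<in>Pow C. \<Sum>D\<in>Pow (C - B). f B (B \<union> D))"
proof -
  have "(\<Sum>D\<in>Pow C. \<Sum>B\<in>Pow D. f B D) = (\<Sum>(D, B)\<in>(SIGMA D:Pow C. Pow D). f B D)"
    using assms by (subst sum.Sigma) (auto intro: finite_subset)
  also have "\<dots> = (\<Sum>(B, D)\<in>(SIGMA B:Pow C. Pow (C - B)). f B (B \<union> D))"
    by (rule sum.reindex_bij_witness[where j="\<lambda>(D, B). (B, D - B)" and i="\<lambda>(B, D). (B \<union> D, B)"])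
       (auto simp: Un_absorb1)
  also have "\<dots> = (\<Sum>B\<in>Pow C. \<Sum>D\<in>Pow (C - B). f B (B \<union> D))"
    using assms by (subst sum.Sigma) (auto intro: finite_subset)
  finally show ?thesis .
qed

lemma sum_supsets_insert:
  assumes "c \<in> C"
  shows "(\<Sum>B\<in>{B. c \<in> B \<and> B \<subseteq> C}. f B) = (\<Sum>B\<in>Pow (C - {c}). f (insert c B))"
proof -
  have "{B. c \<in> B \<and> B \<subseteq> C} = insert c ` Pow (C - {c})"
  proof
    show "{B. c \<in> B \<and> B \<subseteq> C} \<subseteq> insert c ` Pow (C - {c})"
    proof
      fix B assume "B \<in> {B. c \<in> B \<and> B \<subseteq> C}"
      then have "B = insert c (B - {c})" "B - {c} \<in> Pow (C - {c})" by auto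
      then show "B \<in> insert c ` Pow (C - {c})" by blast
    qed
  qed (use assms in auto)
  moreover have "inj_on (insert c) (Pow (C - {c}))"
    by (rule inj_onI) (auto simp: insert_ident)
  ultimately show ?thesis by (simp add: sum.reindex)
qed

locale linear_statistics =
  fixes T :: "nat set" and c :: "'i \<Rightarrow> rat" and w :: "'i \<Rightarrow> nat \<Rightarrow> rat"
  assumes finite_T: "finite T" and zero_notin_T: "0 \<notin> T"
begin

definition lin :: "'i \<Rightarrow> nat multiset \<Rightarrow> rat" where
  "lin i q = c i + (\<Sum>m\<in>T. w i m * of_nat (count q m))"

definition moment :: "'i set \<Rightarrow> useries" where
  "moment C = bracket (\<lambda>q. \<Prod>i\<in>C. lin i q)"

definition cumulant_formula :: "'i set \<Rightarrow> useries" where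
  "cumulant_formula B = uconst (if card B = 1 then (\<Sum>b\<in>B. c b) else 0) +
     (\<Sum>m\<in>T. uconst (\<Prod>b\<in>B. w b m) * useries_of_fps m (polylog_fps (card B - 1)))"

definition lin_without :: "nat \<Rightarrow> 'i \<Rightarrow> nat multiset \<Rightarrow> rat" where
  "lin_without m i q = c i + (\<Sum>m'\<in>T - {m}. w i m' * of_nat (count q m'))"

lemma nonzero_of_mem_T: "m \<in> T \<Longrightarrow> m \<noteq> 0"
  using zero_notin_T by metis

lemma moment_empty: "moment {} = 1"
  by (simp add: moment_def bracket_const uconst_1)

lemma ignores_part_lin_without: "ignores_part m (\<lambda>q. \<Prod>i\<in>C. lin_without m i q)"
  unfolding ignores_part_def lin_without_def by (auto intro!: prod.cong sum.cong)

lemma lin_split: "m \<in> T \<Longrightarrow> lin i q = w i m * of_nat (count q m) + lin_without m i q"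
  unfolding lin_def lin_without_def using finite_T by (simp add: sum.remove algebra_simps)

lemma bracket_count_power_lin:
  assumes m: "m \<in> T" and C: "finite C"
  shows "bracket (\<lambda>q. of_nat (count q m) ^ k * (\<Prod>i\<in>C. lin i q)) =
    (\<Sum>D\<in>Pow C. uconst (\<Prod>i\<in>D. w i m) * moment_count m (card D + k) *
      bracket (\<lambda>q. \<Prod>i\<in>C - D. lin_without m i q))"
proof -
  have m0: "m \<noteq> 0" using m by (rule nonzero_of_mem_T)
  have "(\<Prod>i\<in>C. lin i q) =
      (\<Sum>D\<in>Pow C. (\<Prod>i\<in>D. w i m) * of_nat (count q m) ^ card D * (\<Prod>i\<in>C - D. lin_without m i q))"
    for q
    by (simp add: lin_split[OF m] prod_add[OF C] prod.distrib)
  then have "bracket (\<lambda>q. of_nat (count q m) ^ k * (\<Prod>i\<in>C. lin i q)) =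
      (\<Sum>D\<in>Pow C. uconst (\<Prod>i\<in>D. w i m) * bracket (\<lambda>q. of_nat (count q m) ^ (card D + k) *
        (\<Prod>i\<in>C - D. lin_without m i q)))"
    by (simp add: sum_distrib_left power_add mult_ac flip: bracket_scale bracket_sum)
  also have "\<dots> = (\<Sum>D\<in>Pow C. uconst (\<Prod>i\<in>D. w i m) * moment_count m (card D + k) *
      bracket (\<lambda>q. \<Prod>i\<in>C - D. lin_without m i q))"
  proof (intro sum.cong refl)
    fix D
    show "uconst (\<Prod>i\<in>D. w i m) * bracket (\<lambda>q. of_nat (count q m) ^ (card D + k) *
        (\<Prod>i\<in>C - D. lin_without m i q)) = uconst (\<Prod>i\<in>D. w i m) * moment_count m (card D + k) *
        bracket (\<lambda>q. \<Prod>i\<in>C - D. lin_without m i q)"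
      using bracket_count_mult_ignoring[OF m0 ignores_part_lin_without,
          where \<phi>="\<lambda>s. of_nat s ^ (card D + k)"]
      by (simp add: moment_count_def mult.assoc)
  qed
  finally show ?thesis .
qed

lemma bracket_count_lin:
  assumes m: "m \<in> T" and C: "finite C"
  shows "bracket (\<lambda>q. of_nat (count q m) * (\<Prod>i\<in>C. lin i q)) =
    (\<Sum>B\<in>Pow C. uconst (\<Prod>b\<in>B. w b m) * useries_of_fps m (polylog_fps (card B)) * moment (C - B))"
proof -
  let ?W = "\<lambda>D. uconst (\<Prod>i\<in>D. w i m)" and ?P = "\<lambda>B. useries_of_fps m (polylog_fps (card B))"
  let ?A = "\<lambda>S. bracket (\<lambda>q. \<Prod>i\<in>S. lin_without m i q)"
  have m0: "m \<noteq> 0" using m by (rule nonzero_of_mem_T)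
  have finite_Pow: "finite D" if "D \<in> Pow C" for D using that C by (auto intro: finite_subset)
  have moment_expand: "moment S = (\<Sum>D\<in>Pow S. ?W D * moment_count m (card D) * ?A (S - D))"
    if "finite S" for S
    using bracket_count_power_lin[OF m that, of 0] by (simp add: moment_def)
  have "bracket (\<lambda>q. of_nat (count q m) * (\<Prod>i\<in>C. lin i q)) =
      (\<Sum>D\<in>Pow C. ?W D * moment_count m (Suc (card D)) * ?A (C - D))"
    using bracket_count_power_lin[OF m C, of 1] by simp
  also have "\<dots> = (\<Sum>D\<in>Pow C. \<Sum>B\<in>Pow D. ?W D * (?P B * moment_count m (card (D - B)) * ?A (C - D)))"
    by (intro sum.cong refl)
      (simp add: moment_count_Suc_card[OF m0 finite_Pow] sum_distrib_left sum_distrib_right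
        mult.assoc)
  also have "\<dots> = (\<Sum>B\<in>Pow C. \<Sum>D\<in>Pow (C - B).
      ?W (B \<union> D) * (?P B * moment_count m (card (B \<union> D - B)) * ?A (C - (B \<union> D))))"
    by (rule sum_Pow_Pow_reindex[OF C])
  also have "\<dots> = (\<Sum>B\<in>Pow C. ?W B * ?P B *
      (\<Sum>D\<in>Pow (C - B). ?W D * moment_count m (card D) * ?A (C - B - D)))"
  proof (intro sum.cong refl)
    fix B assume B: "B \<in> Pow C"
    have "?W (B \<union> D) * (?P B * moment_count m (card (B \<union> D - B)) * ?A (C - (B \<union> D))) =
        ?W B * ?P B * (?W D * moment_count m (card D) * ?A (C - B - D))"
      if D: "D \<in> Pow (C - B)" for D
    proof -
      have "B \<inter> D = {}" "finite B" "finite D" using B D C by (auto intro: finite_subset)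
      then have "?W (B \<union> D) = ?W B * ?W D" by (simp add: prod.union_disjoint uconst_mult)
      moreover have "B \<union> D - B = D" "C - (B \<union> D) = C - B - D" using \<open>B \<inter> D = {}\<close> by auto
      ultimately show ?thesis by (simp add: mult_ac)
    qed
    then show "(\<Sum>D\<in>Pow (C - B). ?W (B \<union> D) * (?P B * moment_count m (card (B \<union> D - B)) *
        ?A (C - (B \<union> D)))) =
        ?W B * ?P B * (\<Sum>D\<in>Pow (C - B). ?W D * moment_count m (card D) * ?A (C - B - D))"
      by (simp add: sum_distrib_left)
  qed
  also have "\<dots> = (\<Sum>B\<in>Pow C. ?W B * ?P B * moment (C - B))"
    using C by (simp add: moment_expand)
  finally show ?thesis .
qed

lemma moment_insert:
  assumes "finite C" "i \<notin> C"
  shows "moment (insert i C) = uconst (c i) * moment C +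
    (\<Sum>m\<in>T. \<Sum>B\<in>Pow C. uconst (w i m) *
      (uconst (\<Prod>b\<in>B. w b m) * useries_of_fps m (polylog_fps (card B)) * moment (C - B)))"
proof -
  have "(\<Prod>j\<in>insert i C. lin j q) =
      c i * (\<Prod>j\<in>C. lin j q) + (\<Sum>m\<in>T. w i m * (of_nat (count q m) * (\<Prod>j\<in>C. lin j q)))" for q
    using assms by (simp add: lin_def algebra_simps sum_distrib_right)
  then have "moment (insert i C) = uconst (c i) * moment C +
      (\<Sum>m\<in>T. uconst (w i m) * bracket (\<lambda>q. of_nat (count q m) * (\<Prod>j\<in>C. lin j q)))"
    by (simp add: moment_def bracket_add bracket_scale bracket_sum)
  then show ?thesis
    using assms(1) by (simp add: bracket_count_lin sum_distrib_left)
qed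

lemma cumulant_formula_insert:
  assumes "finite B" "i \<notin> B"
  shows "cumulant_formula (insert i B) = uconst (if B = {} then c i else 0) +
    (\<Sum>m\<in>T. uconst (w i m) * (uconst (\<Prod>b\<in>B. w b m) * useries_of_fps m (polylog_fps (card B))))"
  using assms by (auto simp: cumulant_formula_def uconst_mult mult.assoc)

lemma moment_recursion:
  assumes C: "finite C" and i: "i \<in> C"
  shows "(\<Sum>B\<in>{B. i \<in> B \<and> B \<subseteq> C}. cumulant_formula B * moment (C - B)) = moment C"
proof -
  let ?C = "C - {i}"
  have C': "finite ?C" "i \<notin> ?C" using C by auto
  have B: "finite B \<and> i \<notin> B" if "B \<in> Pow ?C" for B
    using that C'(1) by (auto intro: finite_subset)
  have "(\<Sum>B\<in>{B. i \<in> B \<and> B \<subseteq> C}. cumulant_formula B * moment (C - B)) =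
      (\<Sum>B\<in>Pow ?C. cumulant_formula (insert i B) * moment (?C - B))"
    by (simp only: sum_supsets_insert[OF i] Diff_insert2[symmetric])
  also have "\<dots> = (\<Sum>B\<in>Pow ?C. uconst (if B = {} then c i else 0) * moment (?C - B)) +
      (\<Sum>B\<in>Pow ?C. \<Sum>m\<in>T. uconst (w i m) *
        (uconst (\<Prod>b\<in>B. w b m) * useries_of_fps m (polylog_fps (card B)) * moment (?C - B)))"
    unfolding sum.distrib[symmetric]
    by (intro sum.cong refl)
      (simp add: B cumulant_formula_insert distrib_right sum_distrib_right mult.assoc)
  also have "(\<Sum>B\<in>Pow ?C. uconst (if B = {} then c i else 0) * moment (?C - B)) =
      uconst (c i) * moment ?C"
  proof -
    have "(\<Sum>B\<in>Pow ?C. uconst (if B = {} then c i else 0) * moment (?C - B)) =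
        (\<Sum>B\<in>Pow ?C. if B = {} then uconst (c i) * moment (?C - B) else 0)"
      by (intro sum.cong) (auto simp: uconst_0)
    then show ?thesis using C'(1) by simp
  qed
  also have "(\<Sum>B\<in>Pow ?C. \<Sum>m\<in>T. uconst (w i m) *
        (uconst (\<Prod>b\<in>B. w b m) * useries_of_fps m (polylog_fps (card B)) * moment (?C - B))) =
      (\<Sum>m\<in>T. \<Sum>B\<in>Pow ?C. uconst (w i m) *
        (uconst (\<Prod>b\<in>B. w b m) * useries_of_fps m (polylog_fps (card B)) * moment (?C - B)))"
    by (rule sum.swap)
  finally show ?thesis using moment_insert[OF C', unfolded insert_Diff[OF i]] by simp
qed

theorem cumulant_moment:
  assumes "finite C" "C \<noteq> {}"
  shows "cumulant moment C = cumulant_formula C"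
proof (rule cumulant_unique[where U=C, symmetric])
  fix C' i assume "C' \<subseteq> C" "i \<in> C'"
  then show "(\<Sum>B\<in>{B. i \<in> B \<and> B \<subseteq> C'}. cumulant_formula B * moment (C' - B)) = moment C'"
    by (intro moment_recursion) (auto intro: finite_subset[OF _ assms(1)])
qed (use assms moment_empty in auto)

lemma cumulant_formula_eq_bracket:
  "cumulant_formula C = bracket (\<lambda>q. (if card C = 1 then \<Sum>b\<in>C. c b else 0) +
     (\<Sum>m\<in>T. (\<Prod>b\<in>C. w b m) * faulhaber (card C) (count q m)))"
  by (simp add: cumulant_formula_def bracket_add bracket_const bracket_sum bracket_scale
      bracket_faulhaber nonzero_of_mem_T)

end

section \<open>The connected product of the S_k\<close>

text \<open>The coefficient at p only sees functions on submultisets of p, where S_k is a linear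
  statistic over the finitely many parts of p.\<close>

definition agree_below :: "nat multiset \<Rightarrow> useries \<Rightarrow> useries \<Rightarrow> bool" where
  "agree_below p x y \<longleftrightarrow> (\<forall>N. N \<subseteq># p \<longrightarrow> ucoeff x N = ucoeff y N)"

lemma agree_below_refl: "agree_below p x x"
  by (simp add: agree_below_def)

lemma agree_below_add: "agree_below p x x' \<Longrightarrow> agree_below p y y' \<Longrightarrow> agree_below p (x + y) (x' + y')"
  by (simp add: agree_below_def)

lemma agree_below_mult:
  assumes "agree_below p x x'" "agree_below p y y'"
  shows "agree_below p (x * y) (x' * y')"
  unfolding agree_below_def ucoeff_mult
proof (intro allI impI sum.cong refl)
  fix N A assume "N \<subseteq># p" "A \<in> {A. A \<subseteq># N}"
  then have "A \<subseteq># p" "N - A \<subseteq># p"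
    by (auto intro: subset_mset.order_trans) (meson diff_subset_eq_self subset_mset.order_trans)
  then show "ucoeff x A * ucoeff y (N - A) = ucoeff x' A * ucoeff y' (N - A)"
    using assms by (simp add: agree_below_def)
qed

lemma agree_below_sum:
  "(\<And>i. i \<in> I \<Longrightarrow> agree_below p (f i) (g i)) \<Longrightarrow> agree_below p (sum f I) (sum g I)"
  by (induction I rule: infinite_finite_induct)
    (auto simp: agree_below_refl intro: agree_below_add)

lemma agree_below_prod:
  "(\<And>i. i \<in> I \<Longrightarrow> agree_below p (f i) (g i)) \<Longrightarrow> agree_below p (prod f I) (prod g I)"
  by (induction I rule: infinite_finite_induct)
    (auto simp: agree_below_refl intro: agree_below_mult)

lemma agree_below_bracket:
  assumes "\<And>q. q \<subseteq># p \<Longrightarrow> f q = g q"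
  shows "agree_below p (bracket f) (bracket g)"
proof -
  have "agree_below p (genu f) (genu g)" using assms by (simp add: agree_below_def ucoeff_genu)
  then show ?thesis by (simp add: bracket_eq agree_below_mult agree_below_refl)
qed

lemma agree_below_cumulant:
  "(\<And>A. agree_below p (m A) (m' A)) \<Longrightarrow> agree_below p (cumulant m C) (cumulant m' C)"
  unfolding cumulant_def
  by (intro agree_below_sum agree_below_mult agree_below_refl agree_below_prod)

lemma ucoeff_mult_Zu_cong: "agree_below p x y \<Longrightarrow> ucoeff (x * Zu) p = ucoeff (y * Zu) p"
  using agree_below_mult[OF _ agree_below_refl, of p x y Zu] by (simp add: agree_below_def)

lemma ucoeff_bracket_mult_Zu: "is_partition p \<Longrightarrow> ucoeff (bracket f * Zu) p = f p"
  by (simp add: bracket_mult_Zu ucoeff_genu is_partition_def)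

lemma connected_product_eq:
  assumes "is_partition p"
  shows "connected_product n f p = ucoeff (cumulant (\<lambda>A. bracket (\<lambda>q. \<Prod>a\<in>A. f a q)) {1..n} * Zu) p"
proof -
  have fin: "finite \<alpha>" if "\<alpha> \<in> {P. partition_on {1..n} P}" for \<alpha>
    using that finite_elements[of "{1..n}"] by auto
  have "connected_product n f p = (\<Sum>\<alpha>\<in>{P. partition_on {1..n} P}.
      partition_moebius (card \<alpha>) * ucoeff ((\<Prod>A\<in>\<alpha>. bracket (\<lambda>q. \<Prod>a\<in>A. f a q)) * Zu) p)"
    unfolding connected_product_def partition_moebius_def
    by (intro sum.cong refl) (simp add: odot_family_eq[OF fin assms])
  also have "\<dots> = ucoeff (cumulant (\<lambda>A. bracket (\<lambda>q. \<Prod>a\<in>A. f a q)) {1..n} * Zu) p"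
    unfolding cumulant_def sum_distrib_right ucoeff_sum
    by (intro sum.cong refl) (simp add: partition_moebius_useries mult.assoc ucoeff_uconst_mult)
  finally show ?thesis .
qed

lemma sum_mset_image_eq_sum_count:
  fixes f :: "'a \<Rightarrow> 'b::comm_semiring_1"
  assumes "finite U" "set_mset q \<subseteq> U"
  shows "(\<Sum>x\<in>#q. f x) = (\<Sum>m\<in>U. of_nat (count q m) * f m)"
  using assms(2)
proof (induction q)
  case (add x q)
  have "of_nat (count (add_mset x q) m) * f m =
      of_nat (count q m) * f m + (if m = x then f m else 0)"
    for m
    by (auto simp: algebra_simps)
  then have "(\<Sum>m\<in>U. of_nat (count (add_mset x q) m) * f m) =
      (\<Sum>m\<in>U. of_nat (count q m) * f m) + (\<Sum>m\<in>U. if m = x then f m else 0)"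
    by (simp add: sum.distrib)
  also have "(\<Sum>m\<in>U. if m = x then f m else 0) = f x"
    using assms(1) add.prems by simp
  finally show ?case using add by (simp add: add.commute)
qed simp

lemma faulhaber_eq_of_nat_iff: "n \<ge> 1 \<Longrightarrow> (\<forall>N\<ge>1. faulhaber n N = of_nat N) \<longleftrightarrow> n = 1"
proof
  assume "n \<ge> 1" "\<forall>N\<ge>1. faulhaber n N = of_nat N"
  then have "1 + 2 ^ (n - 1) = (2::rat)"
    by (auto simp: faulhaber_def numeral_2_eq_2 dest: spec[of _ 2])
  then have "(2::rat) ^ (n - 1) = 2 ^ 0" by simp
  then show "n = 1" using \<open>n \<ge> 1\<close> power_inject_exp[of "2::rat" "n - 1" 0] by simp
qed (simp add: faulhaber_def)

lemma S_f_constant_term: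
  assumes "n \<ge> 1" "\<forall>i\<in>{1..n}. k i > 0"
  shows "(if card {1..n} = 1 then \<Sum>b\<in>{1..n}. - bernoulli (k b) / (2 * of_nat (k b)) else 0) =
    (if \<forall>N\<ge>1. faulhaber n N = of_nat N
     then - bernoulli ((\<Sum>i=1..n. k i) - n + 1) / (2 * of_nat ((\<Sum>i=1..n. k i) - n + 1)) else 0)"
proof -
  have "(\<forall>N\<ge>1. faulhaber n N = of_nat N) \<longleftrightarrow> n = 1"
    using assms(1) by (rule faulhaber_eq_of_nat_iff)
  moreover have "(\<Sum>i=1..n. k i) - n + 1 = k 1" if "n = 1" using that assms(2) by simp
  ultimately show ?thesis by auto
qed

lemma prod_power_diff_one:
  assumes "\<forall>i\<in>I. k i > (0::nat)"
  shows "(\<Prod>i\<in>I. x ^ (k i - 1)) = x ^ (sum k I - card I)"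
proof -
  have "(\<Sum>i\<in>I. k i - 1) + card I = (\<Sum>i\<in>I. k i)"
    using assms by (induction I rule: infinite_finite_induct) auto
  then have "(\<Sum>i\<in>I. k i - 1) = sum k I - card I" by simp
  then show ?thesis by (simp flip: power_sum)
qed

theorem corollary3p5p6:
  fixes n :: nat and k :: "nat \<Rightarrow> nat"
  assumes "n \<ge> 1"
    and "\<forall>i\<in>{1..n}. k i > 0 \<and> even (k i)"
  shows "\<forall>p. is_partition p \<longrightarrow>
    connected_product n (\<lambda>i. S (k i)) p = S_f ((\<Sum>i=1..n. k i) - n) (faulhaber n) p"
proof (intro allI impI)
  fix p assume p: "is_partition p"
  have k: "\<forall>i\<in>{1..n}. k i > 0"
    using assms(2) by blast
  define c :: "nat \<Rightarrow> rat" where "c i = - bernoulli (k i) / (2 * of_nat (k i))" for i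
  define w :: "nat \<Rightarrow> nat \<Rightarrow> rat" where "w i m = of_nat m ^ (k i - 1)" for i m
  interpret linear_statistics "set_mset p" c w
    using p by unfold_locales (auto simp: is_partition_def)
  have "S (k i) q = lin i q" if "q \<subseteq># p" for i q
    using set_mset_mono[OF that]
    by (simp add: S_def lin_def c_def w_def sum_mset_image_eq_sum_count mult.commute)
  then have "connected_product n (\<lambda>i. S (k i)) p = ucoeff (cumulant moment {1..n} * Zu) p"
    unfolding connected_product_eq[OF p] moment_def
    by (intro ucoeff_mult_Zu_cong agree_below_cumulant agree_below_bracket) simp
  also have "cumulant moment {1..n} = cumulant_formula {1..n}"
    using assms(1) by (simp add: cumulant_moment)
  also have "ucoeff (cumulant_formula {1..n} * Zu) p = S_f ((\<Sum>i=1..n. k i) - n) (faulhaber n) p"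
    unfolding cumulant_formula_eq_bracket ucoeff_bracket_mult_Zu[OF p] S_f_def c_def w_def
      prod_power_diff_one[OF k] S_f_constant_term[OF assms(1) k]
    by simp
  finally show "connected_product n (\<lambda>i. S (k i)) p = S_f ((\<Sum>i=1..n. k i) - n) (faulhaber n) p" .
qed

end
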